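(* Let $D$ be a Euclidean domain with fraction field $K$, and let $R(D)$ be the subring of $K$ generated by the set $\{1/d \mid d \in D\setminus\{0\}\}$. Suppose $D$ is not Egyptian. Then $R(D)$ is a discrete valuation ring (of rank one, not a field), and the set consisting of the units of $D$ together with $0$ is a field.
   Context: A Euclidean function on an integral domain $D$ is a function $f: D\setminus\{0\} \to \mathbb{Z}$ such that for all nonzero $a,b \in D$: (1) $f(ab) \geq f(a)$, and (2) there exist $q,r \in D$ with $b = aq + r$ and either $r=0$ or $f(r) < f(a)$. A Euclidean domain is an integral domain admitting a Euclidean function. An element of $K$ is called $D$-Egyptian if it is a sum of reciprocals of distinct nonzero elements of $D$. The domain $D$ is called Egyptian if every nonzero element of $K$ is $D$-Egyptian. *)

theory Defs
  imports "HOL-Computational_Algebra.Fraction_Field"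
begin

text \<open>The integral domain D is a type 'a :: idom; its fraction field K is 'a fract,
  with D embedded via d \<mapsto> Fract d 1.\<close>

definition euclidean_function :: "('a::idom \<Rightarrow> int) \<Rightarrow> bool" where
  "euclidean_function f \<longleftrightarrow>
     (\<forall>a b. a \<noteq> 0 \<and> b \<noteq> 0 \<longrightarrow>
        f (a * b) \<ge> f a \<and> (\<exists>q r. b = a * q + r \<and> (r = 0 \<or> f r < f a)))"

definition euclidean_domain :: "'a::idom itself \<Rightarrow> bool" where
  "euclidean_domain _ \<longleftrightarrow> (\<exists>f :: 'a \<Rightarrow> int. euclidean_function f)"

definition D_egyptian :: "'a::idom fract \<Rightarrow> bool" where
  "D_egyptian x \<longleftrightarrow>
     (\<exists>S :: 'a set. finite S \<and> 0 \<notin> S \<and> x = (\<Sum>d\<in>S. inverse (Fract d 1)))"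

definition egyptian_domain :: "'a::idom itself \<Rightarrow> bool" where
  "egyptian_domain _ \<longleftrightarrow> (\<forall>x :: 'a fract. x \<noteq> 0 \<longrightarrow> D_egyptian x)"

inductive_set gen_subring :: "'b::comm_ring_1 set \<Rightarrow> 'b set" for A where
  base: "x \<in> A \<Longrightarrow> x \<in> gen_subring A"
| one: "1 \<in> gen_subring A"
| add: "x \<in> gen_subring A \<Longrightarrow> y \<in> gen_subring A \<Longrightarrow> x + y \<in> gen_subring A"
| neg: "x \<in> gen_subring A \<Longrightarrow> - x \<in> gen_subring A"
| mult: "x \<in> gen_subring A \<Longrightarrow> y \<in> gen_subring A \<Longrightarrow> x * y \<in> gen_subring A"

definition R_of :: "'a::idom itself \<Rightarrow> 'a fract set" where
  "R_of _ = gen_subring {inverse (Fract d 1) | d :: 'a. d \<noteq> 0}"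

definition discrete_valuation :: "('k::field \<Rightarrow> int) \<Rightarrow> bool" where
  "discrete_valuation v \<longleftrightarrow>
     (\<forall>n. \<exists>x. x \<noteq> 0 \<and> v x = n) \<and>
     (\<forall>x y. x \<noteq> 0 \<and> y \<noteq> 0 \<longrightarrow> v (x * y) = v x + v y) \<and>
     (\<forall>x y. x \<noteq> 0 \<and> y \<noteq> 0 \<and> x + y \<noteq> 0 \<longrightarrow> v (x + y) \<ge> min (v x) (v y))"

text \<open>A subring R of the field K is a discrete valuation ring (of rank one, not a field)
  iff it is the valuation ring {0} \<union> {x \<noteq> 0. v x \<ge> 0} of a discrete valuation v on K.\<close>
definition is_DVR_in :: "'k::field set \<Rightarrow> bool" where
  "is_DVR_in R \<longleftrightarrow> (\<exists>v. discrete_valuation v \<and> R = {x. x = 0 \<or> v x \<ge> 0})"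

definition subfield_of :: "'b::comm_ring_1 set \<Rightarrow> bool" where
  "subfield_of S \<longleftrightarrow> 0 \<in> S \<and> 1 \<in> S \<and>
     (\<forall>x\<in>S. \<forall>y\<in>S. x + y \<in> S \<and> x * y \<in> S) \<and> (\<forall>x\<in>S. - x \<in> S) \<and>
     (\<forall>x\<in>S. x \<noteq> 0 \<longrightarrow> (\<exists>y\<in>S. x * y = 1))"

end

(*
  Let x be a nonzero nonunit of least Euclidean size. Then every element of D is congruent
  modulo x to 0 or to a unit, and from this every nonzero a in D becomes a unit of R(D) after
  multiplication by a suitable power of 1/x. So w |-> (the n with w x^n a unit of R(D)) is a
  discrete valuation with valuation ring R(D), unless x lies in R(D) and R(D) = K.

  The latter cannot happen for a non-Egyptian D, since every element of R(D) is D-Egyptian: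
  a sum of reciprocals of distinct elements plus one more reciprocal 1/d is again such a sum.
  If 1/d already occurs, then 1/d + 1/d is 0 when 2 = 0 and 1/(d h) when 2 h = 1; in every other
  case D has characteristic 0, and 1/d splits as the sum of 1/(d n) over an Egyptian
  representation of 1 whose denominators n avoid the finitely many bad values.

  Finally, if u, w are units with u + w = x q + r, r zero or a unit and q nonzero, then
  x = (u + w - r) / q would lie in R(D); so a sum of units is 0 or a unit.
*)

theory Submission
  imports Defs "HOL-Computational_Algebra.Polynomial_Factorial" "HOL-Analysis.Harmonic_Numbers"
begin

section \<open>Egyptian representations of one\<close>

(* Fibonacci-Sylvester: subtract 1/n for the least n with c \<le> n a; the new numerator n a - c is
   smaller than a. *)
lemma egyptian_fraction_greedy:
  fixes a c B :: nat
  assumes "a < c" and "B * a < c"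
  shows "\<exists>S. finite S \<and> (\<forall>n\<in>S. B < n) \<and> (\<Sum>n\<in>S. 1 / real n) = real a / real c"
  using assms
proof (induction a arbitrary: c B rule: less_induct)
  case (less a)
  show ?case
  proof (cases "a = 0")
    case True
    then show ?thesis by (intro exI[of _ "{}"]) simp
  next
    case False
    obtain q r where qr: "c - 1 = q * a + r" "r < a"
      using div_mult_mod_eq[of "c - 1" a] mod_less_divisor[of a "c - 1"] False by (metis neq0_conv)
    define n where "n = q + 1"
    have n_between: "c \<le> n * a" "n * a < c + a"
      using qr less.prems unfolding n_def by (simp_all add: algebra_simps)
    then have "B < n"
      using less.prems(2) by (meson le_less_trans mult_less_cancel2 not_less)
    define a' where "a' = n * a - c"
    have "a' < a" "a' < c"
      using n_between less.prems(1) unfolding a'_def by linarith+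
    moreover from this(2) have "n * a' < c * n"
      using \<open>B < n\<close> by (simp add: mult.commute)
    moreover have "a' < c * n"
      using \<open>a' < c\<close> \<open>B < n\<close> less_le_trans by fastforce
    ultimately obtain S where S: "finite S" "\<forall>m\<in>S. n < m" "(\<Sum>m\<in>S. 1 / real m) = real a' / real (c * n)"
      using less.IH[of a' "c * n" n] by blast
    have "real a' = real n * real a - real c"
      using n_between unfolding a'_def by (simp add: of_nat_diff)
    then have "1 / real n + real a' / real (c * n) = real a / real c"
      using less.prems \<open>B < n\<close> by (simp add: field_simps)
    then show ?thesis
      using S \<open>B < n\<close> by (intro exI[of _ "insert n S"]) auto
  qed
qed

(* Sum 1/n over (M, b] for the largest b keeping the sum at most 1; the rest is below 1/(b + 1)
   and is completed greedily. *)
lemma egyptian_fraction_one: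
  "\<exists>S. finite S \<and> (\<forall>n\<in>S. M < n) \<and> (\<Sum>n\<in>S. 1 / real n) = 1"
proof -
  define H where "H b = (\<Sum>n\<in>{M<..b}. 1 / real n)" for b
  have H_harm: "H b = harm b - harm M" if "M \<le> b" for b
  proof -
    have "{1..b} = {1..M} \<union> {M<..b}" using that by auto
    then have "harm b = harm M + H b"
      unfolding harm_def H_def by (simp only:) (subst sum.union_disjoint, auto simp: inverse_eq_divide)
    then show ?thesis by simp
  qed
  obtain b' where "harm M + 1 < (harm b' :: real)" "M \<le> b'"
    using eventually_conj[OF filterlim_at_top_dense[THEN iffD1, OF harm_at_top, rule_format, of "harm M + 1"]
        eventually_ge_at_top[of M]]
    by (auto simp: eventually_sequentially)
  then have "1 < H b'" using H_harm by simp
  moreover have "\<not> 1 < H 0" unfolding H_def by simp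
  ultimately obtain b where b: "H b \<le> 1" "1 < H (Suc b)"
    using exists_least_lemma[of "\<lambda>b. 1 < H b"] by (auto simp: not_less)
  have "M \<le> b"
  proof (rule ccontr)
    assume "\<not> M \<le> b"
    then have "{M<..Suc b} = {}" by auto
    then show False using b(2) unfolding H_def by simp
  qed
  then have "{M<..Suc b} = insert (Suc b) {M<..b}" by auto
  then have H_Suc: "H (Suc b) = H b + 1 / real (Suc b)"
    unfolding H_def by simp
  define r where "r = 1 - H b"
  have "r \<in> \<rat>" unfolding r_def H_def by (intro Rats_diff Rats_sum) auto
  then obtain a c :: nat where "c \<noteq> 0" "\<bar>r\<bar> = real a / real c"
    by (rule Rats_abs_nat_div_natE)
  then have r: "r = real a / real c" "c \<noteq> 0"
    using b(1) unfolding r_def by simp_all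
  have "real a / real c < 1 / real (Suc b)" using b(2) H_Suc r unfolding r_def by simp
  then have "real (Suc b * a) < real c"
    using r(2) by (simp add: field_simps)
  then have "Suc b * a < c" by (simp only: of_nat_less_iff)
  moreover from this have "a < c" by simp
  ultimately obtain T where T: "finite T" "\<forall>n\<in>T. Suc b < n" "(\<Sum>n\<in>T. 1 / real n) = r"
    using egyptian_fraction_greedy[of a c "Suc b"] unfolding r(1) by metis
  have "{M<..b} \<inter> T = {}" using T(2) by fastforce
  then have "(\<Sum>n\<in>{M<..b} \<union> T. 1 / real n) = H b + r"
    unfolding H_def by (simp add: sum.union_disjoint T)
  then show ?thesis
    using T \<open>M \<le> b\<close> unfolding r_def by (intro exI[of _ "{M<..b} \<union> T"]) auto
qed

lemma sum_inverse_eq_sum_prod_divide: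
  fixes f :: "'i \<Rightarrow> 'k::field"
  assumes "finite S" and "\<And>n. n \<in> S \<Longrightarrow> f n \<noteq> 0"
  shows "(\<Sum>n\<in>S. inverse (f n)) = (\<Sum>n\<in>S. \<Prod>m\<in>S - {n}. f m) / (\<Prod>m\<in>S. f m)"
proof -
  have "inverse (f n) = (\<Prod>m\<in>S - {n}. f m) / (\<Prod>m\<in>S. f m)" if "n \<in> S" for n
    using prod.remove[OF assms(1) that] assms that by (simp add: field_simps)
  then show ?thesis by (simp add: sum_divide_distrib)
qed

(* Clearing denominators turns the real identity into one between natural numbers. *)
lemma egyptian_fraction_one_field:
  assumes "\<And>m. 0 < m \<Longrightarrow> (of_nat m :: 'k::field) \<noteq> 0"
  shows "\<exists>S. finite S \<and> (\<forall>n\<in>S. M < n) \<and> (\<Sum>n\<in>S. inverse (of_nat n :: 'k)) = 1"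
proof -
  obtain S where S: "finite S" "\<forall>n\<in>S. M < n" "(\<Sum>n\<in>S. 1 / real n) = 1"
    using egyptian_fraction_one by blast
  then have S_pos: "\<And>n. n \<in> S \<Longrightarrow> 0 < n" by fastforce
  have "real (\<Sum>n\<in>S. \<Prod>m\<in>S - {n}. m) = real (\<Prod>m\<in>S. m)"
    using S sum_inverse_eq_sum_prod_divide[OF S(1), of real] S_pos
    by (simp add: inverse_eq_divide field_simps)
  then have nat_identity: "(\<Sum>n\<in>S. \<Prod>m\<in>S - {n}. m) = (\<Prod>m\<in>S. m)"
    by (simp only: of_nat_eq_iff)
  have "(\<Sum>n\<in>S. inverse (of_nat n :: 'k)) = of_nat (\<Sum>n\<in>S. \<Prod>m\<in>S - {n}. m) / of_nat (\<Prod>m\<in>S. m)"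
    using sum_inverse_eq_sum_prod_divide[OF S(1), of "of_nat :: nat \<Rightarrow> 'k"] S_pos assms by simp
  also have "\<dots> = 1"
    unfolding nat_identity using assms S(1) S_pos by (simp add: prod_pos)
  finally show ?thesis using S by blast
qed

section \<open>D-Egyptian elements of the fraction field\<close>

lemma to_fract_of_nat [simp]: "to_fract (of_nat n) = of_nat n"
  by (simp add: to_fract_def Fraction_Field.Fract_of_nat_eq)

lemma to_fract_numeral [simp]: "to_fract (numeral k) = numeral k"
  by (metis of_nat_numeral to_fract_of_nat)

lemma D_egyptian_iff:
  "D_egyptian x \<longleftrightarrow> (\<exists>S. finite S \<and> 0 \<notin> S \<and> x = (\<Sum>d\<in>S. inverse (to_fract d)))"
  by (simp add: D_egyptian_def to_fract_def)

lemma D_egyptian_sum_reciprocals: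
  "finite S \<Longrightarrow> 0 \<notin> S \<Longrightarrow> D_egyptian (\<Sum>d\<in>S. inverse (to_fract d))"
  unfolding D_egyptian_iff by blast

lemma D_egyptian_0: "D_egyptian 0"
  using D_egyptian_sum_reciprocals[of "{}"] by simp

lemma D_egyptian_reciprocal: "d \<noteq> 0 \<Longrightarrow> D_egyptian (inverse (to_fract d))"
  using D_egyptian_sum_reciprocals[of "{d}"] by simp

lemma D_egyptian_1: "D_egyptian 1"
  using D_egyptian_reciprocal[of 1] by simp

lemma D_egyptian_uminus:
  assumes "D_egyptian x"
  shows "D_egyptian (- x)"
proof -
  obtain S where S: "finite S" "0 \<notin> S" "x = (\<Sum>d\<in>S. inverse (to_fract d))"
    using assms unfolding D_egyptian_iff by blast
  have "- x = (\<Sum>d\<in>uminus ` S. inverse (to_fract d))"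
    unfolding S(3) by (simp add: sum.reindex inj_on_def sum_negf)
  moreover have "0 \<notin> uminus ` S" using S(2) by force
  ultimately show ?thesis using D_egyptian_sum_reciprocals[of "uminus ` S"] S(1) by simp
qed

lemma D_egyptian_mult_reciprocal:
  assumes "D_egyptian x" and "c \<noteq> 0"
  shows "D_egyptian (x * inverse (to_fract c))"
proof -
  obtain S where S: "finite S" "0 \<notin> S" "x = (\<Sum>d\<in>S. inverse (to_fract d))"
    using assms unfolding D_egyptian_iff by blast
  have "inj_on (\<lambda>d. d * c) S" using assms(2) by (auto simp: inj_on_def)
  then have "x * inverse (to_fract c) = (\<Sum>d\<in>(\<lambda>d. d * c) ` S. inverse (to_fract d))"
    unfolding S(3) by (simp add: sum.reindex sum_distrib_right)
  moreover have "0 \<notin> (\<lambda>d. d * c) ` S" using S(2) assms(2) by force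
  ultimately show ?thesis using D_egyptian_sum_reciprocals[of "(\<lambda>d. d * c) ` S"] S(1) by simp
qed

lemma D_egyptian_add_reciprocal_two_unit_or_zero:
  fixes d :: "'a::idom"
  assumes two: "(2::'a) = 0 \<or> (2::'a) dvd 1" and "D_egyptian x" and "d \<noteq> 0"
  shows "D_egyptian (x + inverse (to_fract d))"
proof -
  have "D_egyptian ((\<Sum>s\<in>S. inverse (to_fract s)) + inverse (to_fract d))"
    if "finite S" "0 \<notin> S" "d \<noteq> 0" for S and d :: 'a
    using that
  proof (induction "card S" arbitrary: S d rule: less_induct)
    case less
    show ?case
    proof (cases "d \<in> S")
      case False
      then show ?thesis
        using D_egyptian_sum_reciprocals[of "insert d S"] less.prems by (simp add: add.commute)
    next
      case True
      have sum_eq: "(\<Sum>s\<in>S. inverse (to_fract s)) + inverse (to_fract d)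
          = (\<Sum>s\<in>S - {d}. inverse (to_fract s)) + 2 * inverse (to_fract d)"
        using sum.remove[OF less.prems(1) True, of "\<lambda>s. inverse (to_fract s)"] by simp
      consider "(2::'a) = 0" | h :: 'a where "1 = 2 * h" using two by (auto elim: dvdE)
      then show ?thesis
      proof cases
        case 1
        then have "to_fract (2::'a) = 0" by simp
        then have "(2::'a fract) = 0" by simp
        then show ?thesis
          unfolding sum_eq using D_egyptian_sum_reciprocals[of "S - {d}"] less.prems by simp
      next
        case 2
        then have "d * h \<noteq> 0" using less.prems(3) by auto
        have "to_fract h * 2 = 1" using arg_cong[OF 2, of to_fract] by (simp add: mult.commute)
        then have merge: "2 * inverse (to_fract d) = inverse (to_fract (d * h))"
          by (simp add: inverse_unique mult.commute)
        have "card (S - {d}) < card S"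
          using True less.prems(1) by (meson card_Diff1_less)
        then show ?thesis
          unfolding sum_eq merge using less.hyps less.prems \<open>d * h \<noteq> 0\<close> by blast
      qed
    qed
  qed
  then show ?thesis using assms(2,3) unfolding D_egyptian_iff by blast
qed

lemma of_nat_neq_0_if_two_not_unit:
  assumes "(2::'a::idom) \<noteq> 0" and "\<not> (2::'a) dvd 1" and "0 < m"
  shows "(of_nat m :: 'a) \<noteq> 0"
  using assms(3)
proof (induction m rule: less_induct)
  case (less m)
  show ?case
  proof
    assume m0: "(of_nat m :: 'a) = 0"
    define k where "k = m div 2"
    have "m = 2 * k \<or> m = 2 * k + 1" unfolding k_def by presburger
    then show False
    proof
      assume "m = 2 * k"
      then have "(2::'a) * of_nat k = 0" "0 < k" "k < m" using m0 less.prems by auto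
      then show False using less.IH assms(1) by simp
    next
      assume "m = 2 * k + 1"
      then have "(2::'a) * of_nat (k + 1) = 1" using m0 by (simp add: algebra_simps)
      then show False using assms(2) by (metis dvd_triv_left)
    qed
  qed
qed

lemma inj_of_nat_if_of_nat_neq_0:
  assumes "\<And>m. 0 < m \<Longrightarrow> (of_nat m :: 'a::ring_1) \<noteq> 0"
  shows "inj (of_nat :: nat \<Rightarrow> 'a)"
proof (rule linorder_injI)
  fix n n' :: nat assume "n < n'"
  then have "(of_nat (n' - n) :: 'a) \<noteq> 0" by (intro assms) simp
  moreover have "(of_nat (n' - n) :: 'a) = of_nat n' - of_nat n" using \<open>n < n'\<close> by (simp add: of_nat_diff)
  ultimately show "(of_nat n :: 'a) \<noteq> of_nat n'" by simp
qed

(* 1/d is the sum of 1/(d n) over an Egyptian representation N of 1 whose elements exceed every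
   n with d n in S. *)
lemma D_egyptian_add_reciprocal_of_nat_neq_0:
  fixes d :: "'a::idom"
  assumes char: "\<And>m. 0 < m \<Longrightarrow> (of_nat m :: 'a) \<noteq> 0" and "D_egyptian x" and "d \<noteq> 0"
  shows "D_egyptian (x + inverse (to_fract d))"
proof -
  obtain S where S: "finite S" "0 \<notin> S" "x = (\<Sum>s\<in>S. inverse (to_fract s))"
    using assms(2) unfolding D_egyptian_iff by blast
  define g where "g n = d * of_nat n" for n :: nat
  have "inj g"
  proof (rule injI)
    fix n n' assume "g n = g n'"
    then have "(of_nat n :: 'a) = of_nat n'" using assms(3) by (simp add: g_def)
    then show "n = n'" using inj_of_nat_if_of_nat_neq_0[OF char] by (simp add: inj_eq)
  qed
  then have "finite (g -` S)" by (rule finite_vimageI[OF S(1)])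
  then obtain M where M: "\<And>n. g n \<in> S \<Longrightarrow> n \<le> M"
    unfolding finite_nat_set_iff_bounded_le by blast
  have char_fract: "(of_nat m :: 'a fract) \<noteq> 0" if "0 < m" for m
    using char[OF that] by (metis to_fract_eq_0_iff to_fract_of_nat)
  obtain N where N: "finite N" "\<forall>n\<in>N. M < n" "(\<Sum>n\<in>N. inverse (of_nat n :: 'a fract)) = 1"
    using egyptian_fraction_one_field[OF char_fract, of M] by blast
  have disjoint: "S \<inter> g ` N = {}"
    using N(2) by (auto dest!: M)
  have "0 \<notin> g ` N"
    using N(2) char assms(3) unfolding g_def by auto
  have "(\<Sum>t\<in>g ` N. inverse (to_fract t)) = (\<Sum>n\<in>N. inverse (to_fract (g n)))"
    using sum.reindex[OF inj_on_subset[OF \<open>inj g\<close> subset_UNIV]] by simp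
  also have "\<dots> = (\<Sum>n\<in>N. inverse (to_fract d) * inverse (of_nat n))" by (simp add: g_def)
  also have "\<dots> = inverse (to_fract d)" using N(3) by (simp flip: sum_distrib_left)
  finally have "x + inverse (to_fract d) = (\<Sum>t\<in>S \<union> g ` N. inverse (to_fract t))"
    using S(1,3) N(1) disjoint by (simp add: sum.union_disjoint)
  then show ?thesis
    using D_egyptian_sum_reciprocals[of "S \<union> g ` N"] S(1,2) N(1) \<open>0 \<notin> g ` N\<close> by simp
qed

lemma D_egyptian_add_reciprocal:
  fixes d :: "'a::idom"
  assumes "D_egyptian x" and "d \<noteq> 0"
  shows "D_egyptian (x + inverse (to_fract d))"
proof (cases "(2::'a) = 0 \<or> (2::'a) dvd 1")
  case True
  then show ?thesis using D_egyptian_add_reciprocal_two_unit_or_zero assms by blast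
next
  case False
  then show ?thesis
    using D_egyptian_add_reciprocal_of_nat_neq_0 of_nat_neq_0_if_two_not_unit assms by blast
qed

lemma D_egyptian_add:
  assumes "D_egyptian x" and "D_egyptian y"
  shows "D_egyptian (x + y)"
proof -
  obtain T where T: "finite T" "0 \<notin> T" "y = (\<Sum>t\<in>T. inverse (to_fract t))"
    using assms(2) unfolding D_egyptian_iff by blast
  have "D_egyptian (x + (\<Sum>t\<in>T. inverse (to_fract t)))"
    using T(1,2)
  proof (induction T rule: finite_induct)
    case empty
    then show ?case using assms(1) by simp
  next
    case (insert t T)
    then show ?case
      using D_egyptian_add_reciprocal[of "x + (\<Sum>t\<in>T. inverse (to_fract t))" t]
      by (simp add: algebra_simps)
  qed
  then show ?thesis using T(3) by simp
qed

lemma D_egyptian_sum: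
  "finite I \<Longrightarrow> (\<And>i. i \<in> I \<Longrightarrow> D_egyptian (f i)) \<Longrightarrow> D_egyptian (\<Sum>i\<in>I. f i)"
  by (induction I rule: finite_induct) (simp_all add: D_egyptian_0 D_egyptian_add)

lemma D_egyptian_mult:
  assumes "D_egyptian x" and "D_egyptian y"
  shows "D_egyptian (x * y)"
proof -
  obtain T where T: "finite T" "0 \<notin> T" "y = (\<Sum>t\<in>T. inverse (to_fract t))"
    using assms(2) unfolding D_egyptian_iff by blast
  then have "x * y = (\<Sum>t\<in>T. x * inverse (to_fract t))" by (simp add: sum_distrib_left)
  moreover have "D_egyptian (x * inverse (to_fract t))" if "t \<in> T" for t
    using D_egyptian_mult_reciprocal[OF assms(1)] T(2) that by metis
  ultimately show ?thesis using D_egyptian_sum[OF T(1)] by metis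
qed

section \<open>The subring R(D)\<close>

lemma R_of_eq_gen_subring: "R_of TYPE('a::idom) = gen_subring {inverse (to_fract d) | d. d \<noteq> 0}"
  by (simp add: R_of_def to_fract_def)

lemma R_of_reciprocal: "d \<noteq> 0 \<Longrightarrow> inverse (to_fract d) \<in> R_of TYPE('a::idom)"
  unfolding R_of_eq_gen_subring by (rule gen_subring.base) blast

lemma R_of_1: "1 \<in> R_of TYPE('a::idom)"
  unfolding R_of_eq_gen_subring by (rule gen_subring.one)

lemma R_of_add: "x \<in> R_of TYPE('a::idom) \<Longrightarrow> y \<in> R_of TYPE('a) \<Longrightarrow> x + y \<in> R_of TYPE('a)"
  unfolding R_of_eq_gen_subring by (rule gen_subring.add)

lemma R_of_uminus: "x \<in> R_of TYPE('a::idom) \<Longrightarrow> - x \<in> R_of TYPE('a)"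
  unfolding R_of_eq_gen_subring by (rule gen_subring.neg)

lemma R_of_mult: "x \<in> R_of TYPE('a::idom) \<Longrightarrow> y \<in> R_of TYPE('a) \<Longrightarrow> x * y \<in> R_of TYPE('a)"
  unfolding R_of_eq_gen_subring by (rule gen_subring.mult)

lemma R_of_diff: "x \<in> R_of TYPE('a::idom) \<Longrightarrow> y \<in> R_of TYPE('a) \<Longrightarrow> x - y \<in> R_of TYPE('a)"
  using R_of_add R_of_uminus by (metis diff_conv_add_uminus)

lemma R_of_0: "0 \<in> R_of TYPE('a::idom)"
  using R_of_diff[OF R_of_1 R_of_1] by simp

lemma R_of_power: "x \<in> R_of TYPE('a::idom) \<Longrightarrow> x ^ n \<in> R_of TYPE('a)"
  by (induction n) (simp_all add: R_of_1 R_of_mult)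

lemma R_of_to_fract_unit:
  assumes "(u::'a::idom) dvd 1"
  shows "to_fract u \<in> R_of TYPE('a)"
proof -
  obtain w where "1 = u * w" using assms by (elim dvdE)
  then have "w \<noteq> 0" "to_fract u = inverse (to_fract w)"
    by (auto, metis inverse_unique mult.commute to_fract_1 to_fract_mult)
  then show ?thesis using R_of_reciprocal by metis
qed

lemma R_of_to_fract_unit_or_0: "(u::'a::idom) = 0 \<or> u dvd 1 \<Longrightarrow> to_fract u \<in> R_of TYPE('a)"
  using R_of_0 R_of_to_fract_unit by fastforce

lemma R_of_eq_UNIV_if_to_fract_in:
  assumes "\<And>a::'a::idom. to_fract a \<in> R_of TYPE('a)"
  shows "R_of TYPE('a) = UNIV"
proof -
  have "z \<in> R_of TYPE('a)" for z :: "'a fract"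
  proof (cases z)
    case (Fract a b)
    then show ?thesis
      using R_of_mult[OF assms R_of_reciprocal] by (simp add: Fract_conv_to_fract divide_inverse)
  qed
  then show ?thesis by blast
qed

lemma D_egyptian_if_in_R_of:
  assumes "z \<in> R_of TYPE('a::idom)"
  shows "D_egyptian z"
  using assms unfolding R_of_eq_gen_subring
proof (induction rule: gen_subring.induct)
  case (base x)
  then show ?case using D_egyptian_reciprocal by blast
qed (simp_all add: D_egyptian_1 D_egyptian_add D_egyptian_uminus D_egyptian_mult)

lemma egyptian_domain_if_R_of_eq_UNIV:
  "R_of TYPE('a::idom) = UNIV \<Longrightarrow> egyptian_domain TYPE('a)"
  unfolding egyptian_domain_def using D_egyptian_if_in_R_of by blast

lemma subfield_of_units_and_0:
  assumes "\<And>u w :: 'a::comm_ring_1. u dvd 1 \<Longrightarrow> w dvd 1 \<Longrightarrow> u + w = 0 \<or> u + w dvd 1"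
  shows "subfield_of ({u :: 'a. u dvd 1} \<union> {0})"
  unfolding subfield_of_def
proof (intro conjI ballI impI)
  fix a b :: 'a assume "a \<in> {u. u dvd 1} \<union> {0}" "b \<in> {u. u dvd 1} \<union> {0}"
  then show "a + b \<in> {u. u dvd 1} \<union> {0}" "a * b \<in> {u. u dvd 1} \<union> {0}"
    using assms mult_dvd_mono[of a 1 b 1] by auto
next
  fix a :: 'a assume "a \<in> {u. u dvd 1} \<union> {0}" "a \<noteq> 0"
  then obtain b where "1 = a * b" by (auto elim: dvdE)
  then show "\<exists>b\<in>{u. u dvd 1} \<union> {0}. a * b = 1"
    by (metis Un_iff dvd_triv_right mem_Collect_eq)
qed auto

section \<open>Universal side divisors and the valuation\<close>

lemma euclidean_function_1_le:
  "euclidean_function f \<Longrightarrow> a \<noteq> 0 \<Longrightarrow> f 1 \<le> f a"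
  unfolding euclidean_function_def by (metis mult_1 one_neq_zero)

lemma euclidean_exists_universal_side_divisor:
  fixes f :: "'a::idom \<Rightarrow> int"
  assumes f: "euclidean_function f" and "(y::'a) \<noteq> 0" and "\<not> y dvd 1"
  shows "\<exists>x::'a. x \<noteq> 0 \<and> \<not> x dvd 1 \<and> (\<forall>b. \<exists>q r. b = x * q + r \<and> (r = 0 \<or> r dvd 1))"
proof -
  define P where "P z \<longleftrightarrow> z \<noteq> 0 \<and> \<not> z dvd 1" for z :: 'a
  obtain x where x: "P x" "\<And>z. P z \<Longrightarrow> nat (f x - f 1) \<le> nat (f z - f 1)"
    using ex_has_least_nat[of P y "\<lambda>z. nat (f z - f 1)"] assms(2,3) unfolding P_def by blast
  have minimal: "f x \<le> f z" if "P z" for z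
  proof -
    have "f 1 \<le> f x" "f 1 \<le> f z"
      using x(1) that euclidean_function_1_le[OF f] unfolding P_def by blast+
    then show ?thesis using x(2)[OF that] by (simp add: nat_le_eq_zle)
  qed
  have unit_remainder: "\<exists>q r. b = x * q + r \<and> (r = 0 \<or> r dvd 1)" for b
  proof (cases "b = 0")
    case True
    then show ?thesis by (intro exI[of _ 0]) simp
  next
    case False
    then obtain q r where qr: "b = x * q + r" "r = 0 \<or> f r < f x"
      using f x(1) unfolding euclidean_function_def P_def by blast
    have "r = 0 \<or> r dvd 1"
    proof (rule ccontr)
      assume r: "\<not> (r = 0 \<or> r dvd 1)"
      then have "f x \<le> f r" using minimal unfolding P_def by blast
      then show False using qr(2) r by simp
    qed
    with qr(1) show ?thesis by blast
  qed
  from x(1) have "x \<noteq> 0" "\<not> x dvd 1" unfolding P_def by simp_all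
  then show ?thesis using unit_remainder by (intro exI[of _ x]) simp
qed

locale universal_side_divisor =
  fixes f :: "'a::idom \<Rightarrow> int" and x :: 'a
  assumes euclidean: "euclidean_function f"
    and nonzero: "x \<noteq> 0"
    and not_unit: "\<not> x dvd 1"
    and unit_remainder: "\<exists>q r. b = x * q + r \<and> (r = 0 \<or> r dvd 1)"
begin

abbreviation R :: "'a fract set" where "R \<equiv> R_of TYPE('a)"

abbreviation X :: "'a fract" where "X \<equiv> to_fract x"

lemma X_neq_0: "X \<noteq> 0"
  using nonzero by simp

lemma inverse_X_power_in_R: "inverse X ^ n \<in> R"
  using R_of_power[OF R_of_reciprocal[OF nonzero]] .

lemma remainder_over_X_power_in_R:
  "r = 0 \<or> r dvd 1 \<Longrightarrow> to_fract r * inverse X ^ n \<in> R"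
  using R_of_mult[OF R_of_to_fract_unit_or_0 inverse_X_power_in_R] .

lemma exists_X_power_scaling_in_R: "\<exists>n. to_fract a * inverse X ^ n \<in> R"
proof (cases "a = 0")
  case True
  then show ?thesis using R_of_0 by auto
next
  case False
  then show ?thesis
  proof (induction "nat (f a - f 1)" arbitrary: a rule: less_induct)
    case less
    obtain a1 c where a: "a = x * a1 + c" "c = 0 \<or> c dvd 1"
      using unit_remainder by blast
    show ?case
    proof (cases "a1 = 0")
      case True
      then have "to_fract a * inverse X ^ 0 \<in> R"
        using remainder_over_X_power_in_R[OF a(2), of 0] a(1) by simp
      then show ?thesis by blast
    next
      case False
      obtain q r where qr: "a1 = a * q + r" "r = 0 \<or> f r < f a"
        using euclidean less.prems False unfolding euclidean_function_def by blast
      obtain m where m: "to_fract r * inverse X ^ m \<in> R"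
      proof (cases "r = 0")
        case True
        then show ?thesis using that[of 0] R_of_0 by simp
      next
        case False
        then have "nat (f r - f 1) < nat (f a - f 1)"
          using qr(2) euclidean_function_1_le[OF euclidean False] by simp
        then show ?thesis using less.hyps False that by blast
      qed
      \<comment> \<open>Dividing \<open>a1\<close> by \<open>a\<close> itself lowers the size: \<open>a (1 - x q) = x r + c\<close>.\<close>
      define h where "h = 1 - x * q"
      have "h \<noteq> 0" unfolding h_def using not_unit by (metis dvdI eq_iff_diff_eq_0)
      have "a * h = x * r + c" unfolding h_def using a qr by (simp add: algebra_simps)
      then have "to_fract a * inverse X ^ Suc m
          = (to_fract r * inverse X ^ m + to_fract c * inverse X ^ Suc m) * inverse (to_fract h)"
        using \<open>h \<noteq> 0\<close> X_neq_0 by (simp add: field_simps power_inverse flip: to_fract_mult to_fract_add)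
      moreover have "\<dots> \<in> R"
        using R_of_mult[OF R_of_add[OF m remainder_over_X_power_in_R[OF a(2)]]
            R_of_reciprocal[OF \<open>h \<noteq> 0\<close>]] .
      ultimately show ?thesis by metis
    qed
  qed
qed

lemma X_power_scaling_in_R_iff_quotient:
  assumes "a = x * b + c" and "c = 0 \<or> c dvd 1"
  shows "to_fract a * inverse X ^ Suc n \<in> R \<longleftrightarrow> to_fract b * inverse X ^ n \<in> R"
proof -
  have "to_fract a * inverse X ^ Suc n = to_fract b * inverse X ^ n + to_fract c * inverse X ^ Suc n"
    using assms(1) X_neq_0 by (simp add: field_simps power_inverse)
  then show ?thesis
    using R_of_add R_of_diff remainder_over_X_power_in_R[OF assms(2)] by (metis add_diff_cancel_right')
qed

lemma inverse_X_power_scaling_in_R_from_quotient: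
  assumes "a = x * b + c" and "c = 0 \<or> c dvd 1" and "a \<noteq> 0" and "b \<noteq> 0"
    and "X ^ m * inverse (to_fract b) \<in> R"
  shows "X ^ Suc m * inverse (to_fract a) \<in> R"
proof -
  have "to_fract a \<noteq> 0" using assms(3) by simp
  then have "1 - to_fract c * inverse (to_fract a) = (to_fract a - to_fract c) * inverse (to_fract a)"
    by (simp add: algebra_simps)
  also have "\<dots> = X * to_fract b * inverse (to_fract a)" using assms(1) by simp
  finally have one_minus: "1 - to_fract c * inverse (to_fract a) = X * to_fract b * inverse (to_fract a)" .
  have "X ^ Suc m * inverse (to_fract a)
      = (X ^ m * inverse (to_fract b)) * (1 - to_fract c * inverse (to_fract a))"
    unfolding one_minus using assms(4) by (simp add: field_simps)
  also have "\<dots> \<in> R"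
    using R_of_mult[OF assms(5) R_of_diff[OF R_of_1 R_of_mult[OF R_of_to_fract_unit_or_0[OF assms(2)]
          R_of_reciprocal[OF assms(3)]]]] .
  finally show ?thesis .
qed

lemma R_unit_X_power_scaling_if_in_R:
  assumes "a \<noteq> 0" and "to_fract a * inverse X ^ n \<in> R"
  shows "\<exists>m. to_fract a * inverse X ^ m \<in> R \<and> X ^ m * inverse (to_fract a) \<in> R"
  using assms
proof (induction n arbitrary: a)
  case 0
  then show ?case using R_of_reciprocal[OF 0(1)] by (intro exI[of _ 0]) simp
next
  case (Suc n)
  obtain b c where a: "a = x * b + c" "c = 0 \<or> c dvd 1"
    using unit_remainder by blast
  show ?case
  proof (cases "b = 0")
    case True
    then have "to_fract a \<in> R" using R_of_to_fract_unit_or_0[OF a(2)] a(1) by simp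
    then show ?thesis using R_of_reciprocal[OF Suc.prems(1)] by (intro exI[of _ 0]) simp
  next
    case False
    have "to_fract b * inverse X ^ n \<in> R"
      using X_power_scaling_in_R_iff_quotient[OF a] Suc.prems(2) by simp
    then obtain m where m: "to_fract b * inverse X ^ m \<in> R" "X ^ m * inverse (to_fract b) \<in> R"
      using Suc.IH[OF False] by blast
    have "to_fract a * inverse X ^ Suc m \<in> R"
      using X_power_scaling_in_R_iff_quotient[OF a] m(1) by simp
    moreover have "X ^ Suc m * inverse (to_fract a) \<in> R"
      using inverse_X_power_scaling_in_R_from_quotient[OF a Suc.prems(1) False m(2)] .
    ultimately show ?thesis by blast
  qed
qed

lemma exists_R_unit_X_power_scaling:
  "a \<noteq> 0 \<Longrightarrow> \<exists>m. to_fract a * inverse X ^ m \<in> R \<and> X ^ m * inverse (to_fract a) \<in> R"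
  using R_unit_X_power_scaling_if_in_R exists_X_power_scaling_in_R by blast

lemma R_eq_UNIV_if_X_in_R:
  assumes "X \<in> R"
  shows "R = UNIV"
proof (rule R_of_eq_UNIV_if_to_fract_in)
  fix a
  obtain n where "to_fract a * inverse X ^ n \<in> R"
    using exists_X_power_scaling_in_R by blast
  moreover have "to_fract a = (to_fract a * inverse X ^ n) * X ^ n"
    using X_neq_0 by (simp add: power_inverse)
  ultimately show "to_fract a \<in> R"
    using R_of_mult R_of_power assms by metis
qed

end

locale universal_side_divisor_not_in_R = universal_side_divisor +
  assumes X_notin_R: "to_fract x \<notin> R_of TYPE('a)"
begin

definition R_unit :: "'a fract \<Rightarrow> bool" where
  "R_unit w \<longleftrightarrow> w \<in> R \<and> w \<noteq> 0 \<and> inverse w \<in> R"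

lemma R_unit_1: "R_unit 1"
  unfolding R_unit_def using R_of_1 by simp

lemma R_unit_mult: "R_unit v \<Longrightarrow> R_unit w \<Longrightarrow> R_unit (v * w)"
  unfolding R_unit_def by (auto intro: R_of_mult)

lemma X_powi_in_R:
  assumes "n \<le> 0"
  shows "X powi n \<in> R"
proof -
  have "X powi n = inverse X ^ nat (- n)"
    using assms by (cases "n = 0") (simp_all add: power_int_def)
  then show ?thesis using inverse_X_power_in_R by simp
qed

lemma X_powi_notin_R:
  assumes "0 < n"
  shows "X powi n \<notin> R"
proof
  assume "X powi n \<in> R"
  moreover have "X = X powi n * X powi (1 - n)"
    using X_neq_0 by (simp flip: power_int_add)
  moreover have "X powi (1 - n) \<in> R" using assms by (intro X_powi_in_R) simp
  ultimately show False using X_notin_R R_of_mult by metis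
qed

lemma exponent_le_if_R_unit:
  assumes "w \<noteq> 0" and "w * X powi n \<in> R" and "R_unit (w * X powi m)"
  shows "n \<le> m"
proof (rule ccontr)
  assume "\<not> n \<le> m"
  have "w * X powi m \<noteq> 0" using assms(3) unfolding R_unit_def by simp
  then have "X powi (n - m) = (w * X powi n) * inverse (w * X powi m)"
    using X_neq_0 by (simp add: power_int_diff field_simps)
  then have "X powi (n - m) \<in> R" using assms(2,3) R_of_mult unfolding R_unit_def by metis
  then show False using X_powi_notin_R \<open>\<not> n \<le> m\<close> by simp
qed

lemma exists_R_unit_X_powi_scaling:
  assumes "w \<noteq> 0"
  shows "\<exists>n. R_unit (w * X powi n)"
proof -
  obtain a b where w: "w = to_fract a * inverse (to_fract b)" "a \<noteq> 0" "b \<noteq> 0"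
    using assms by (cases w) (auto simp: Fract_conv_to_fract divide_inverse)
  obtain ma where ma: "to_fract a * inverse X ^ ma \<in> R" "X ^ ma * inverse (to_fract a) \<in> R"
    using exists_R_unit_X_power_scaling[OF w(2)] by blast
  obtain mb where mb: "to_fract b * inverse X ^ mb \<in> R" "X ^ mb * inverse (to_fract b) \<in> R"
    using exists_R_unit_X_power_scaling[OF w(3)] by blast
  define k where "k = int mb - int ma"
  have "w * X powi k = (to_fract a * inverse X ^ ma) * (X ^ mb * inverse (to_fract b))"
    unfolding w(1) k_def using X_neq_0 by (simp add: power_int_diff field_simps power_inverse)
  moreover have "inverse (w * X powi k) = (X ^ ma * inverse (to_fract a)) * (to_fract b * inverse X ^ mb)"
    unfolding w(1) k_def using X_neq_0 by (simp add: power_int_diff field_simps power_inverse)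
  moreover have "w * X powi k \<noteq> 0" using assms X_neq_0 by simp
  ultimately have "R_unit (w * X powi k)"
    unfolding R_unit_def using R_of_mult[OF ma(1) mb(2)] R_of_mult[OF ma(2) mb(1)] by presburger
  then show ?thesis by blast
qed

(* The sign convention makes 1/x a uniformizer: val (inverse X) = 1. *)
definition val :: "'a fract \<Rightarrow> int" where
  "val w = (THE n. R_unit (w * X powi n))"

lemma val_eqI:
  assumes "w \<noteq> 0" and "R_unit (w * X powi n)"
  shows "val w = n"
  unfolding val_def
proof (rule the_equality)
  show "R_unit (w * X powi n)" by fact
  fix m assume "R_unit (w * X powi m)"
  then show "m = n"
    using exponent_le_if_R_unit[OF assms(1)] assms(2) unfolding R_unit_def by (meson order_antisym)
qed

lemma R_unit_val: "w \<noteq> 0 \<Longrightarrow> R_unit (w * X powi val w)"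
  using exists_R_unit_X_powi_scaling val_eqI by metis

lemma le_val_if_in_R: "w \<noteq> 0 \<Longrightarrow> w * X powi n \<in> R \<Longrightarrow> n \<le> val w"
  using exponent_le_if_R_unit R_unit_val by blast

lemma discrete_valuation_val: "discrete_valuation val"
  unfolding discrete_valuation_def
proof (intro conjI allI impI)
  fix n :: int
  have "R_unit (X powi (- n) * X powi n)"
    using X_neq_0 R_unit_1 by (simp flip: power_int_add)
  then show "\<exists>w. w \<noteq> 0 \<and> val w = n"
    using X_neq_0 val_eqI by (metis power_int_not_zero)
next
  fix v w :: "'a fract" assume "v \<noteq> 0 \<and> w \<noteq> 0"
  then have "R_unit ((v * w) * X powi (val v + val w))"
    using R_unit_mult[OF R_unit_val R_unit_val] X_neq_0 by (simp add: power_int_add algebra_simps)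
  then show "val (v * w) = val v + val w"
    using \<open>v \<noteq> 0 \<and> w \<noteq> 0\<close> val_eqI by simp
next
  fix v w :: "'a fract" assume vw: "v \<noteq> 0 \<and> w \<noteq> 0 \<and> v + w \<noteq> 0"
  have le_val_add: "val v \<le> val (v + w)" if "v \<noteq> 0" "w \<noteq> 0" "v + w \<noteq> 0" "val v \<le> val w" for v w
  proof -
    have "(v + w) * X powi val v = v * X powi val v + (w * X powi val w) * X powi (val v - val w)"
      using X_neq_0 by (simp add: power_int_diff field_simps)
    moreover have "X powi (val v - val w) \<in> R" using that(4) by (intro X_powi_in_R) simp
    ultimately have "(v + w) * X powi val v \<in> R"
      using R_unit_val[OF that(1)] R_unit_val[OF that(2)] R_of_add R_of_mult
      unfolding R_unit_def by metis
    then show ?thesis using le_val_if_in_R that(3) by blast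
  qed
  show "min (val v) (val w) \<le> val (v + w)"
  proof (cases "val v \<le> val w")
    case True
    then show ?thesis using le_val_add[of v w] vw by simp
  next
    case False
    then show ?thesis using le_val_add[of w v] vw by (simp add: add.commute)
  qed
qed

lemma R_eq_val_nonneg: "R = {w. w = 0 \<or> 0 \<le> val w}"
proof (intro set_eqI iffI)
  fix w assume "w \<in> R"
  then show "w \<in> {w. w = 0 \<or> 0 \<le> val w}" using le_val_if_in_R[of w 0] by auto
next
  fix w assume "w \<in> {w. w = 0 \<or> 0 \<le> val w}"
  then consider "w = 0" | "w \<noteq> 0" "0 \<le> val w" by blast
  then show "w \<in> R"
  proof cases
    case 1
    then show ?thesis using R_of_0 by simp
  next
    case 2
    have "w = (w * X powi val w) * X powi (- val w)"
      using X_neq_0 by (simp add: power_int_minus)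
    moreover have "X powi (- val w) \<in> R" using 2(2) by (intro X_powi_in_R) simp
    ultimately show ?thesis
      using R_unit_val[OF 2(1)] R_of_mult unfolding R_unit_def by metis
  qed
qed

lemma is_DVR_in_R: "is_DVR_in R"
  unfolding is_DVR_in_def using discrete_valuation_val R_eq_val_nonneg by blast

lemma unit_add_unit:
  assumes "u dvd (1::'a)" and "w dvd 1"
  shows "u + w = 0 \<or> u + w dvd 1"
proof -
  obtain q r where qr: "u + w = x * q + r" "r = 0 \<or> r dvd 1"
    using unit_remainder by blast
  have "q = 0"
  proof (rule ccontr)
    assume "q \<noteq> 0"
    have "to_fract u + to_fract w - to_fract r \<in> R"
      using R_of_diff[OF R_of_add R_of_to_fract_unit_or_0[OF qr(2)]] R_of_to_fract_unit assms by blast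
    also have "to_fract u + to_fract w - to_fract r = X * to_fract q"
      using arg_cong[OF qr(1), of to_fract] by simp
    finally have "X * to_fract q \<in> R" .
    then have "X * to_fract q * inverse (to_fract q) \<in> R"
      using R_of_mult R_of_reciprocal[OF \<open>q \<noteq> 0\<close>] by blast
    moreover have "X * to_fract q * inverse (to_fract q) = X" using \<open>q \<noteq> 0\<close> by simp
    ultimately show False using X_notin_R by simp
  qed
  then show ?thesis using qr by simp
qed

end

theorem theorem2p10:
  assumes "euclidean_domain TYPE('a::idom)"
    and "\<not> egyptian_domain TYPE('a)"
  shows "is_DVR_in (R_of TYPE('a)) \<and> subfield_of ({u :: 'a. u dvd 1} \<union> {0})"
proof -
  obtain f :: "'a \<Rightarrow> int" where f: "euclidean_function f"
    using assms(1) unfolding euclidean_domain_def by blast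
  have R_proper: "R_of TYPE('a) \<noteq> UNIV"
    using assms(2) egyptian_domain_if_R_of_eq_UNIV by blast
  have "\<exists>y::'a. y \<noteq> 0 \<and> \<not> y dvd 1"
  proof (rule ccontr)
    assume "\<not> ?thesis"
    then have "to_fract a \<in> R_of TYPE('a)" for a :: 'a
      using R_of_to_fract_unit_or_0 by blast
    then show False using R_proper R_of_eq_UNIV_if_to_fract_in by blast
  qed
  then obtain x :: 'a where x: "x \<noteq> 0" "\<not> x dvd 1" "\<forall>b. \<exists>q r. b = x * q + r \<and> (r = 0 \<or> r dvd 1)"
    using euclidean_exists_universal_side_divisor[OF f] by blast
  interpret universal_side_divisor f x
    using f x by unfold_locales simp_all
  have "to_fract x \<notin> R_of TYPE('a)"
    using R_proper R_eq_UNIV_if_X_in_R by blast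
  then interpret universal_side_divisor_not_in_R f x
    by unfold_locales
  show ?thesis
    by (intro conjI is_DVR_in_R subfield_of_units_and_0 unit_add_unit)
qed

end
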